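(* Let $G=(V,E)$ be a finite simple undirected graph of maximum degree at most $\Delta$, let $M$ be computed by a run of \textsc{MinGreedy} on $G$, and let $M^*$ be a maximum matching such that each component of $(V,M\cup M^* )$ with an edge is a singleton or an $M$-$M^*$-path. Let $\{u,v\}\in M$. If $\{u,v\}$ is a singleton, then $u$ and $v$ together are the source of at most $2(\Delta-1)$ transfers. If $\{u,v\}$ is an edge of an $M$-$M^*$-path, then $u$ and $v$ together are the source of at most $2(\Delta-2)$ transfers.
   Context: \textsc{MinGreedy}: starting with $M=\emptyset$, repeatedly select an arbitrary node $u$ of minimum non-zero current degree and an arbitrary neighbor $v$ of $u$, add $\{u,v\}$ to $M$ and remove all edges incident with $u$ or $v$ from the current graph. A singleton is an edge of $M\cap M^*$ forming a component of $(V,M\cup M^* )$. An $M$-$M^*$-path is a component of $(V,M\cup M^* )$ that is an alternating path starting and ending with an $M^*$-edge, with $m\geq1$ edges of $M$ and $m+1$ edges of $M^*$; its endpoints are its two $M$-uncovered end nodes. Let $F=E\setminus(M\cup M^* )$. For an endpoint $w$ of an $M$-$M^*$-path, an edge $\{v,w\}\in F$ is a transfer from $v$ to $w$ if, in the step of the algorithm in which $v$ is matched, the current degree of $w$ drops to at most $1$ (i.e. after that step $w$ has current degree at most $1$). *)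

theory Defs
  imports Main
begin

definition simple_graph :: "'a set \<Rightarrow> 'a set set \<Rightarrow> bool" where
  "simple_graph V E \<longleftrightarrow> finite V \<and> (\<forall>e\<in>E. \<exists>x y. e = {x, y} \<and> x \<noteq> y \<and> x \<in> V \<and> y \<in> V)"

definition deg :: "'a set set \<Rightarrow> 'a \<Rightarrow> nat" where
  "deg F x = card {e \<in> F. x \<in> e}"

definition matching :: "'a set set \<Rightarrow> 'a set set \<Rightarrow> bool" where
  "matching E M \<longleftrightarrow> M \<subseteq> E \<and> (\<forall>e\<in>M. \<forall>e'\<in>M. e \<noteq> e' \<longrightarrow> e \<inter> e' = {})"

definition maximum_matching :: "'a set set \<Rightarrow> 'a set set \<Rightarrow> bool" where
  "maximum_matching E M \<longleftrightarrow> matching E M \<and> (\<forall>M'. matching E M' \<longrightarrow> card M' \<le> card M)"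

text \<open>A run of MinGreedy is recorded as the list of chosen pairs (u,v), u first.
  cur E steps i is the current edge set before step i (after i steps).\<close>
definition cur :: "'a set set \<Rightarrow> ('a \<times> 'a) list \<Rightarrow> nat \<Rightarrow> 'a set set" where
  "cur E steps i = {e \<in> E. \<forall>j<i. fst (steps ! j) \<notin> e \<and> snd (steps ! j) \<notin> e}"

definition mingreedy_run :: "'a set set \<Rightarrow> ('a \<times> 'a) list \<Rightarrow> bool" where
  "mingreedy_run E steps \<longleftrightarrow>
     (\<forall>i<length steps.
        {fst (steps ! i), snd (steps ! i)} \<in> cur E steps i \<and>
        (\<forall>x. deg (cur E steps i) x > 0 \<longrightarrow> deg (cur E steps i) (fst (steps ! i)) \<le> deg (cur E steps i) x))
     \<and> cur E steps (length steps) = {}"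

definition matching_of :: "('a \<times> 'a) list \<Rightarrow> 'a set set" where
  "matching_of steps = {{u, v} | u v. (u, v) \<in> set steps}"

definition path_edges :: "'a list \<Rightarrow> 'a set set" where
  "path_edges xs = {{xs ! i, xs ! Suc i} | i. Suc i < length xs}"

definition singleton_comp :: "'a set set \<Rightarrow> 'a set set \<Rightarrow> 'a set \<Rightarrow> bool" where
  "singleton_comp M Ms e \<longleftrightarrow> e \<in> M \<inter> Ms \<and> (\<forall>e'\<in>M \<union> Ms. e' \<inter> e \<noteq> {} \<longrightarrow> e' = e)"

definition mm_path :: "'a set set \<Rightarrow> 'a set set \<Rightarrow> 'a list \<Rightarrow> bool" where
  "mm_path M Ms xs \<longleftrightarrow> distinct xs \<and> even (length xs) \<and> length xs \<ge> 4 \<and>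
     (\<forall>i. Suc i < length xs \<longrightarrow>
        (if even i then {xs ! i, xs ! Suc i} \<in> Ms else {xs ! i, xs ! Suc i} \<in> M)) \<and>
     (\<forall>e\<in>M \<union> Ms. e \<inter> set xs \<noteq> {} \<longrightarrow> e \<in> path_edges xs)"

definition path_endpoint :: "'a set set \<Rightarrow> 'a set set \<Rightarrow> 'a \<Rightarrow> bool" where
  "path_endpoint M Ms w \<longleftrightarrow> (\<exists>xs. mm_path M Ms xs \<and> (w = hd xs \<or> w = last xs))"

definition transfer :: "'a set set \<Rightarrow> ('a \<times> 'a) list \<Rightarrow> 'a set set \<Rightarrow> 'a \<Rightarrow> 'a \<Rightarrow> bool" where
  "transfer E steps Ms x w \<longleftrightarrow>
     {x, w} \<in> E - (matching_of steps \<union> Ms) \<and> path_endpoint (matching_of steps) Ms w \<and>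
     (\<exists>i<length steps. (x = fst (steps ! i) \<or> x = snd (steps ! i)) \<and>
        deg (cur E steps (Suc i)) w \<le> 1)"

end

theory Submission
  imports Defs
begin

text \<open>Only degree counting is needed: a transfer from x uses an edge at x outside
  M \<union> M*, so x is the source of at most deg x - k transfers when k edges of M \<union> M* meet x.
  Both ends of an M-edge lie on that edge (k = 1); both ends of an M-edge of an M-M*-path
  also lie on a further M*-edge of the path (k = 2), because an M-edge can only sit at an
  odd position of the path.\<close>

lemma finite_neighbours:
  assumes "finite F"
  shows "finite {w. {x, w} \<in> F}"
proof -
  have "inj_on (\<lambda>w. {x, w}) {w. {x, w} \<in> F}"
    by (rule inj_onI) (auto simp: doubleton_eq_iff)
  moreover have "(\<lambda>w. {x, w}) ` {w. {x, w} \<in> F} \<subseteq> F" by auto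
  ultimately show ?thesis using assms finite_imageD finite_subset by metis
qed

lemma card_neighbours_outside:
  assumes "finite E"
  shows "card {w. {x, w} \<in> E - A} + card {e \<in> E \<inter> A. x \<in> e} \<le> deg E x"
proof -
  let ?N = "{w. {x, w} \<in> E - A}"
  have inj: "inj_on (\<lambda>w. {x, w}) ?N"
    by (rule inj_onI) (auto simp: doubleton_eq_iff)
  have "card ?N = card ((\<lambda>w. {x, w}) ` ?N)" using card_image[OF inj] by simp
  also have "\<dots> \<le> card {e \<in> E - A. x \<in> e}"
    by (rule card_mono) (use assms in auto)
  finally have "card ?N + card {e \<in> E \<inter> A. x \<in> e}
      \<le> card ({e \<in> E - A. x \<in> e} \<union> {e \<in> E \<inter> A. x \<in> e})"
    using assms by (subst card_Un_disjoint) auto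
  also have "{e \<in> E - A. x \<in> e} \<union> {e \<in> E \<inter> A. x \<in> e} = {e \<in> E. x \<in> e}" by blast
  finally show ?thesis unfolding deg_def .
qed

lemma simple_graph_edges_subset_Pow:
  assumes "simple_graph V E"
  shows "E \<subseteq> Pow V"
proof
  fix e assume "e \<in> E"
  then obtain x y where "e = {x, y}" "x \<in> V" "y \<in> V"
    using assms unfolding simple_graph_def by blast
  thus "e \<in> Pow V" by simp
qed

lemma simple_graph_finite_edges:
  assumes "simple_graph V E"
  shows "finite E"
  using simple_graph_edges_subset_Pow[OF assms] assms
  unfolding simple_graph_def by (simp add: finite_subset)

lemma simple_graph_edge_vertices:
  assumes "simple_graph V E" "{u, v} \<in> E"
  shows "u \<in> V" "v \<in> V"
  using simple_graph_edges_subset_Pow[OF assms(1)] assms(2) by auto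

lemma mingreedy_run_matching:
  assumes "mingreedy_run E steps"
  shows "matching E (matching_of steps)"
proof -
  let ?e = "\<lambda>i. {fst (steps ! i), snd (steps ! i)}"
  have chosen: "?e i \<in> cur E steps i" if "i < length steps" for i
    using assms that unfolding mingreedy_run_def by blast
  have disjoint: "?e i \<inter> ?e k = {}" if "i \<noteq> k" "i < length steps" "k < length steps" for i k
  proof -
    have "?e i \<inter> ?e k = {}" if "i < k" "k < length steps" for i k
      using chosen[of k] that unfolding cur_def by auto
    with that show ?thesis by (metis Int_commute linorder_neqE_nat)
  qed
  have range: "matching_of steps = ?e ` {..<length steps}"
    unfolding matching_of_def by (force simp: in_set_conv_nth)
  show ?thesis
    unfolding matching_def
  proof (intro conjI ballI impI)
    show "matching_of steps \<subseteq> E"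
      using chosen unfolding range cur_def by auto
    fix e e' assume "e \<in> matching_of steps" "e' \<in> matching_of steps" "e \<noteq> e'"
    then obtain i k where ik: "i < length steps" "k < length steps" "e = ?e i" "e' = ?e k"
      unfolding range by auto
    with \<open>e \<noteq> e'\<close> have "i \<noteq> k" by auto
    with ik disjoint show "e \<inter> e' = {}" by simp
  qed
qed

lemma consecutive_edges_meet:
  assumes "distinct xs" "Suc (Suc k) < length xs"
  shows "{xs ! k, xs ! Suc k} \<inter> {xs ! Suc k, xs ! Suc (Suc k)} \<noteq> {}"
    and "{xs ! k, xs ! Suc k} \<noteq> {xs ! Suc k, xs ! Suc (Suc k)}"
proof -
  have "xs ! k \<noteq> xs ! Suc (Suc k)" "xs ! Suc k \<noteq> xs ! Suc (Suc k)"
    using assms by (simp_all add: nth_eq_iff_index_eq)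
  thus "{xs ! k, xs ! Suc k} \<noteq> {xs ! Suc k, xs ! Suc (Suc k)}"
    by (auto simp: doubleton_eq_iff)
qed auto

lemma matching_disjoint:
  assumes "matching E M" "e \<in> M" "e' \<in> M" "e \<noteq> e'"
  shows "e \<inter> e' = {}"
  using assms unfolding matching_def by blast

lemma mm_path_edge_in_M:
  assumes "mm_path M Ms xs" "Suc i < length xs" "odd i"
  shows "{xs ! i, xs ! Suc i} \<in> M"
  using assms unfolding mm_path_def by (metis (no_types, lifting))

lemma mm_path_edge_in_Ms:
  assumes "mm_path M Ms xs" "Suc i < length xs" "even i"
  shows "{xs ! i, xs ! Suc i} \<in> Ms"
  using assms unfolding mm_path_def by (metis (no_types, lifting))

lemma mm_path_matching_edge_odd:
  assumes "mm_path M Ms xs" "matching E M"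
    and "Suc j < length xs" "{xs ! j, xs ! Suc j} \<in> M"
  shows "odd j"
proof
  assume "even j"
  have len: "length xs \<ge> 4" using assms(1) unfolding mm_path_def by simp
  \<comment> \<open>the M-edge at an even index would meet a neighbouring M-edge of the path\<close>
  obtain k where k: "Suc (Suc k) < length xs"
    "{xs ! k, xs ! Suc k} \<in> M" "{xs ! Suc k, xs ! Suc (Suc k)} \<in> M"
  proof (cases j)
    case 0
    with len assms(4) mm_path_edge_in_M[OF assms(1), of 1] that[of 0]
    show ?thesis by (simp add: numeral_eq_Suc)
  next
    case (Suc k)
    with \<open>even j\<close> assms(3,4) mm_path_edge_in_M[OF assms(1), of k] that[of k]
    show ?thesis by simp
  qed
  have "distinct xs" using assms(1) unfolding mm_path_def by simp
  from consecutive_edges_meet[OF this k(1)] matching_disjoint[OF assms(2) k(2,3)]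
  show False by blast
qed

lemma mm_path_matching_edge_flanked:
  assumes "mm_path M Ms xs" "matching E M"
    and "{u, v} \<in> M" "{u, v} \<in> path_edges xs" "x \<in> {u, v}"
  shows "\<exists>e\<in>Ms. x \<in> e \<and> e \<noteq> {u, v}"
proof -
  obtain j where j: "{u, v} = {xs ! j, xs ! Suc j}" "Suc j < length xs"
    using assms(4) unfolding path_edges_def by blast
  have "odd j" using mm_path_matching_edge_odd[OF assms(1,2) j(2)] assms(3) j(1) by simp
  then obtain k where k: "j = Suc k" "even k" by (cases j) auto
  have dist: "distinct xs" and "even (length xs)" using assms(1) unfolding mm_path_def by simp_all
  with \<open>odd j\<close> have "Suc (Suc j) \<noteq> length xs" by (metis even_Suc)
  with j(2) have len: "Suc (Suc j) < length xs" by (rule Suc_lessI)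
  have "x = xs ! j \<or> x = xs ! Suc j" using assms(5) j(1) by blast
  then show ?thesis
  proof
    assume x: "x = xs ! j"
    have "{xs ! k, xs ! j} \<in> Ms"
      using mm_path_edge_in_Ms[OF assms(1), of k] k j(2) by simp
    moreover have "{xs ! k, xs ! j} \<noteq> {u, v}"
      using consecutive_edges_meet(2)[OF dist, of k] j k len by simp
    ultimately show ?thesis using x by (metis insertCI)
  next
    assume x: "x = xs ! Suc j"
    have "{xs ! Suc j, xs ! Suc (Suc j)} \<in> Ms"
      using mm_path_edge_in_Ms[OF assms(1) len] \<open>odd j\<close> by simp
    moreover have "{xs ! Suc j, xs ! Suc (Suc j)} \<noteq> {u, v}"
      using consecutive_edges_meet(2)[OF dist len] j(1) by simp
    ultimately show ?thesis using x by (metis insertCI)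
  qed
qed

lemma card_transfers_from_le:
  assumes "finite E" "deg E x \<le> \<Delta>"
    and "k \<le> card {e \<in> E \<inter> (matching_of steps \<union> Ms). x \<in> e}"
  shows "finite {w. transfer E steps Ms x w}" "card {w. transfer E steps Ms x w} \<le> \<Delta> - k"
proof -
  let ?N = "{w. {x, w} \<in> E - (matching_of steps \<union> Ms)}"
  have sub: "{w. transfer E steps Ms x w} \<subseteq> ?N"
    by (rule Collect_mono) (simp add: transfer_def)
  have fin: "finite ?N" using finite_neighbours[of "E - (matching_of steps \<union> Ms)"] assms(1) by simp
  thus "finite {w. transfer E steps Ms x w}" using sub finite_subset by blast
  have "card {w. transfer E steps Ms x w} \<le> card ?N" using card_mono[OF fin sub] .
  also have "\<dots> \<le> \<Delta> - k"
    using card_neighbours_outside[OF assms(1), of x "matching_of steps \<union> Ms"] assms(2,3) by linarith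
  finally show "card {w. transfer E steps Ms x w} \<le> \<Delta> - k" .
qed

lemma card_transfers_le:
  assumes "finite E" "deg E u \<le> \<Delta>" "deg E v \<le> \<Delta>"
    and "\<And>x. x \<in> {u, v} \<Longrightarrow> k \<le> card {e \<in> E \<inter> (matching_of steps \<union> Ms). x \<in> e}"
  shows "card {(x, w). x \<in> {u, v} \<and> transfer E steps Ms x w} \<le> 2 * (\<Delta> - k)"
proof -
  let ?T = "\<lambda>x. {w. transfer E steps Ms x w}"
  have T: "finite (?T u)" "card (?T u) \<le> \<Delta> - k" "finite (?T v)" "card (?T v) \<le> \<Delta> - k"
    using card_transfers_from_le[OF assms(1)] assms(2-4) by blast+
  have "{(x, w). x \<in> {u, v} \<and> transfer E steps Ms x w} = {u} \<times> ?T u \<union> {v} \<times> ?T v" by blast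
  also have "card \<dots> \<le> card ({u} \<times> ?T u) + card ({v} \<times> ?T v)" by (rule card_Un_le)
  also have "\<dots> \<le> 2 * (\<Delta> - k)" using T by (simp add: card_cartesian_product_singleton)
  finally show ?thesis .
qed

theorem lemma4:
  fixes V :: "'a set" and E :: "'a set set" and \<Delta> :: nat
    and steps :: "('a \<times> 'a) list" and Ms :: "'a set set" and u v :: 'a
  assumes "simple_graph V E"
    and "\<forall>x\<in>V. deg E x \<le> \<Delta>"
    and "mingreedy_run E steps"
    and "maximum_matching E Ms"
    and "\<forall>e\<in>matching_of steps \<union> Ms. singleton_comp (matching_of steps) Ms e \<or>
           (\<exists>xs. mm_path (matching_of steps) Ms xs \<and> e \<in> path_edges xs)"
    and "{u, v} \<in> matching_of steps"
  shows "(singleton_comp (matching_of steps) Ms {u, v} \<longrightarrow>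
           card {(x, w). x \<in> {u, v} \<and> transfer E steps Ms x w} \<le> 2 * (\<Delta> - 1)) \<and>
         ((\<exists>xs. mm_path (matching_of steps) Ms xs \<and> {u, v} \<in> path_edges xs) \<longrightarrow>
           card {(x, w). x \<in> {u, v} \<and> transfer E steps Ms x w} \<le> 2 * (\<Delta> - 2))"
proof -
  let ?incident = "\<lambda>x. {e \<in> E \<inter> (matching_of steps \<union> Ms). x \<in> e}"
  have M: "matching E (matching_of steps)" using mingreedy_run_matching[OF assms(3)] .
  have fin: "finite E" using simple_graph_finite_edges[OF assms(1)] .
  have uvE: "{u, v} \<in> E" using M assms(6) unfolding matching_def by blast
  have MsE: "Ms \<subseteq> E" using assms(4) unfolding maximum_matching_def matching_def by blast
  have deg: "deg E u \<le> \<Delta>" "deg E v \<le> \<Delta>"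
    using assms(2) simple_graph_edge_vertices[OF assms(1) uvE] by auto
  have "card {(x, w). x \<in> {u, v} \<and> transfer E steps Ms x w} \<le> 2 * (\<Delta> - 1)"
  proof (rule card_transfers_le[OF fin deg])
    fix x assume "x \<in> {u, v}"
    with uvE assms(6) have "{u, v} \<in> ?incident x" by auto
    with fin show "1 \<le> card (?incident x)" by (simp add: Suc_le_eq card_gt_0_iff) blast
  qed
  moreover have "card {(x, w). x \<in> {u, v} \<and> transfer E steps Ms x w} \<le> 2 * (\<Delta> - 2)"
    if path: "mm_path (matching_of steps) Ms xs" "{u, v} \<in> path_edges xs" for xs
  proof (rule card_transfers_le[OF fin deg])
    fix x assume x: "x \<in> {u, v}"
    then obtain e where "e \<in> Ms" "x \<in> e" "e \<noteq> {u, v}"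
      using mm_path_matching_edge_flanked[OF path(1) M assms(6) path(2)] by blast
    with x uvE MsE assms(6) have "{{u, v}, e} \<subseteq> ?incident x" by auto
    from card_mono[OF _ this] fin \<open>e \<noteq> {u, v}\<close> show "2 \<le> card (?incident x)" by simp
  qed
  ultimately show ?thesis by blast
qed

end
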